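(* Let $(E,\rho)$ be a weighted space and let $A\subset C_b(E)$ be a subalgebra (with respect to pointwise multiplication) that contains the constant function $1_E$ and separates the points of $E$. Then $A$ is dense in $\mathscr{B}^\rho(E)$ with respect to $\|\cdot\|_\rho$.
   Context: A weighted space is a pair $(E,\rho)$ where $E$ is a completely regular Hausdorff topological space and $\rho:E\to(0,\infty)$ is an admissible weight function, meaning that for every $R\ge 0$ the sublevel set $K_R:=\{x\in E:\rho(x)\le R\}$ is compact. For $f:E\to\mathbb{R}$ put $\|f\|_\rho:=\sup_{x\in E}|f(x)|/\rho(x)$; $\mathscr{B}^\rho(E)$ denotes the closure of $C_b(E)$ (bounded continuous real functions on $E$) with respect to $\|\cdot\|_\rho$ inside the Banach space $\{f:E\to\mathbb{R}:\|f\|_\rho<\infty\}$. *)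

theory Defs
  imports "HOL-Analysis.Analysis"
begin

definition admissible_weight :: "'a topology \<Rightarrow> ('a \<Rightarrow> real) \<Rightarrow> bool" where
  "admissible_weight X \<rho> \<longleftrightarrow>
     (\<forall>x\<in>topspace X. \<rho> x > 0) \<and>
     (\<forall>R\<ge>0. compactin X {x \<in> topspace X. \<rho> x \<le> R})"

definition weighted_space :: "'a topology \<Rightarrow> ('a \<Rightarrow> real) \<Rightarrow> bool" where
  "weighted_space X \<rho> \<longleftrightarrow>
     completely_regular_space X \<and> Hausdorff_space X \<and> admissible_weight X \<rho>"

definition wbounded :: "'a topology \<Rightarrow> ('a \<Rightarrow> real) \<Rightarrow> ('a \<Rightarrow> real) \<Rightarrow> bool" where
  "wbounded X \<rho> f \<longleftrightarrow> bdd_above ((\<lambda>x. \<bar>f x\<bar> / \<rho> x) ` topspace X)"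

text \<open>Weighted sup norm (the 0 only matters for the empty space, all values are nonnegative).\<close>
definition wnorm :: "'a topology \<Rightarrow> ('a \<Rightarrow> real) \<Rightarrow> ('a \<Rightarrow> real) \<Rightarrow> real" where
  "wnorm X \<rho> f = Sup (insert 0 ((\<lambda>x. \<bar>f x\<bar> / \<rho> x) ` topspace X))"

definition Cb :: "'a topology \<Rightarrow> ('a \<Rightarrow> real) set" where
  "Cb X = {f. continuous_map X euclideanreal f \<and> bounded (f ` topspace X)}"

definition B_rho :: "'a topology \<Rightarrow> ('a \<Rightarrow> real) \<Rightarrow> ('a \<Rightarrow> real) set" where
  "B_rho X \<rho> = {f. wbounded X \<rho> f \<and>
      (\<forall>\<epsilon>>0. \<exists>g\<in>Cb X. wbounded X \<rho> (\<lambda>x. f x - g x) \<and> wnorm X \<rho> (\<lambda>x. f x - g x) < \<epsilon>)}"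

end

theory Submission
  imports Defs
begin

(* A function of B^rho(E) is weighted-close to some bounded continuous g, so it suffices to
   approximate g \<in> C_b(E). Since the weight is bounded below by some c > 0 and the sublevel set
   K_R is compact, Stone-Weierstrass on K_R gives h \<in> A uniformly close to g there. Clipping h to
   the range of g and approximating the clipped function by polynomials in h keeps the
   approximant in A, still close to g on K_R, and uniformly bounded on E; outside K_R the weight
   exceeds R, so the bounded error divided by the weight is small as well. *)

(* A copy of the product space 'i \<Rightarrow> real carrying the t2_space instance required by
   Stone_Weierstrass_HOL; the function type itself cannot get one, since it would clash with its
   metric_space arity for countable index types. *)
datatype 'i rtuple = Tuple (coords: "'i \<Rightarrow> real")

instantiation rtuple :: (type) topological_space
begin
definition open_rtuple_def: "open U \<longleftrightarrow> open (Tuple -` U)"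
instance
proof
  show "open (UNIV :: 'a rtuple set)" by (simp add: open_rtuple_def)
  show "open (S \<inter> T)" if "open S" "open T" for S T :: "'a rtuple set"
    using that by (simp add: open_rtuple_def open_Int vimage_Int)
  show "open (\<Union>K)" if "\<forall>S\<in>K. open S" for K :: "'a rtuple set set"
    using that unfolding open_rtuple_def vimage_Union by (intro open_UN) auto
qed
end

lemma open_vimage_coords: "open U \<Longrightarrow> open (coords -` U)"
  by (simp add: open_rtuple_def vimage_def)

lemma open_Collect_coords: "open U \<Longrightarrow> open {z. coords z i \<in> U}"
proof -
  assume "open U"
  then have "open {f :: 'a \<Rightarrow> real. f i \<in> U}"
    using open_vimage[OF _ continuous_on_product_coordinates] by (simp add: vimage_def)
  from open_vimage_coords[OF this] show ?thesis
    by (simp add: vimage_def)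
qed

instance rtuple :: (type) t2_space
proof
  fix x y :: "'a rtuple"
  assume "x \<noteq> y"
  then have "coords x \<noteq> coords y"
    using rtuple.expand by blast
  then obtain i where "coords x i \<noteq> coords y i"
    by auto
  from hausdorff[OF this] obtain U V
    where UV: "open U" "open V" "coords x i \<in> U" "coords y i \<in> V" "U \<inter> V = {}"
    by blast
  show "\<exists>U V. open U \<and> open V \<and> x \<in> U \<and> y \<in> V \<and> U \<inter> V = {}"
  proof (intro exI conjI)
    show "open {z. coords z i \<in> U}" "open {z. coords z i \<in> V}"
      using UV(1,2) by (simp_all add: open_Collect_coords)
    show "x \<in> {z. coords z i \<in> U}" "y \<in> {z. coords z i \<in> V}"
      using UV(3,4) by simp_all
    show "{z. coords z i \<in> U} \<inter> {z. coords z i \<in> V} = {}"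
      using UV(5) by blast
  qed
qed

lemma continuous_on_coords: "continuous_on S coords"
proof -
  have "continuous_on UNIV coords"
    unfolding continuous_on_open_vimage[OF open_UNIV] Int_UNIV_right
    using open_vimage_coords by (intro allI impI)
  then show ?thesis
    by (rule continuous_on_subset) (rule subset_UNIV)
qed

lemma continuous_map_Tuple:
  assumes "continuous_map X euclidean f"
  shows "continuous_map X euclidean (\<lambda>x. Tuple (f x))"
  unfolding continuous_map_def
proof (intro conjI allI impI)
  show "(\<lambda>x. Tuple (f x)) \<in> topspace X \<rightarrow> topspace euclidean"
    by simp
  fix U :: "'b rtuple set"
  assume "openin euclidean U"
  then have "openin euclidean (Tuple -` U)"
    by (simp add: open_rtuple_def)
  then have "openin X {x \<in> topspace X. f x \<in> Tuple -` U}"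
    using assms unfolding continuous_map_def by blast
  then show "openin X {x \<in> topspace X. Tuple (f x) \<in> U}"
    by simp
qed

lemma Hausdorff_space_euclidean_t2: "Hausdorff_space (euclidean :: 'a::t2_space topology)"
  unfolding Hausdorff_space_def disjnt_def open_openin[symmetric] by (metis hausdorff)

lemma Stone_Weierstrass_compactin:
  fixes A :: "('a \<Rightarrow> real) set"
  assumes K: "compactin X K"
    and continuous: "\<And>f. f \<in> A \<Longrightarrow> continuous_map X euclideanreal f"
    and add: "\<And>f g. f \<in> A \<Longrightarrow> g \<in> A \<Longrightarrow> (\<lambda>x. f x + g x) \<in> A"
    and mult: "\<And>f g. f \<in> A \<Longrightarrow> g \<in> A \<Longrightarrow> (\<lambda>x. f x * g x) \<in> A"
    and const: "\<And>c. (\<lambda>x. c) \<in> A"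
    and separating: "\<And>x y. x \<in> K \<Longrightarrow> y \<in> K \<Longrightarrow> x \<noteq> y \<Longrightarrow> \<exists>f\<in>A. f x \<noteq> f y"
    and g: "continuous_map X euclideanreal g" and "0 < e"
  shows "\<exists>h\<in>A. \<forall>x\<in>K. \<bar>g x - h x\<bar> < e"
proof -
  \<comment> \<open>\<Phi> embeds K homeomorphically into the product of copies of \<real> indexed by A\<close>
  define \<Phi> where "\<Phi> x = Tuple (\<lambda>f. if f \<in> A then f x else 0)" for x
  define S where "S = \<Phi> ` K"
  have K_topspace: "K \<subseteq> topspace X"
    using K compactin_subset_topspace by blast
  have "continuous_map X euclidean \<Phi>"
    unfolding \<Phi>_def using continuous
    by (intro continuous_map_Tuple)
       (auto simp: continuous_map_componentwise_UNIV simp flip: euclidean_product_topology)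
  then have \<Phi>_K: "continuous_map (subtopology X K) (top_of_set S) \<Phi>"
    using K_topspace by (auto simp: S_def continuous_map_in_subtopology continuous_map_from_subtopology)
  have "compact S"
    using image_compactin[OF K \<open>continuous_map X euclidean \<Phi>\<close>] by (simp add: S_def)
  have "inj_on \<Phi> K"
  proof (rule inj_onI)
    fix x y assume "x \<in> K" "y \<in> K" "\<Phi> x = \<Phi> y"
    have "f x = f y" if "f \<in> A" for f
      using fun_cong[OF arg_cong[OF \<open>\<Phi> x = \<Phi> y\<close>, of coords], of f] that
      by (simp add: \<Phi>_def)
    then show "x = y"
      using separating \<open>x \<in> K\<close> \<open>y \<in> K\<close> by blast
  qed
  have "homeomorphic_map (subtopology X K) (top_of_set S) \<Phi>"
    using K K_topspace \<Phi>_K \<open>inj_on \<Phi> K\<close>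
    by (intro continuous_imp_homeomorphic_map Hausdorff_space_subtopology Hausdorff_space_euclidean_t2)
       (auto simp: S_def compact_space_subtopology Int_absorb1)
  then obtain \<Psi> where "homeomorphic_maps (subtopology X K) (top_of_set S) \<Phi> \<Psi>"
    using homeomorphic_map_maps by blast
  then have \<Psi>: "continuous_map (top_of_set S) (subtopology X K) \<Psi>"
    and \<Psi>_\<Phi>: "\<And>x. x \<in> K \<Longrightarrow> \<Psi> (\<Phi> x) = x"
    using K_topspace by (auto simp: homeomorphic_maps_def Int_absorb1)
  have "continuous_on S (g \<circ> \<Psi>)"
    using continuous_map_compose[OF \<Psi> continuous_map_from_subtopology[OF g]] by simp
  define P where "P F \<longleftrightarrow> continuous_on S F \<and> (\<exists>h\<in>A. \<forall>x\<in>K. F (\<Phi> x) = h x)" for F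
  have "\<exists>F. P F \<and> (\<forall>y\<in>S. \<bar>(g \<circ> \<Psi>) y - F y\<bar> < e)"
  proof (rule Stone_Weierstrass_HOL[OF \<open>compact S\<close> _ _ _ _ _ \<open>continuous_on S (g \<circ> \<Psi>)\<close> \<open>0 < e\<close>])
    show "P (\<lambda>x. c)" for c
      unfolding P_def using const by auto
    show "continuous_on S F" if "P F" for F
      using that unfolding P_def by blast
    show "P (\<lambda>x. F x + G x)" if "P F \<and> P G" for F G
      using that add unfolding P_def by (auto intro!: continuous_intros)
    show "P (\<lambda>x. F x * G x)" if "P F \<and> P G" for F G
      using that mult unfolding P_def by (auto intro!: continuous_intros)
    show "\<exists>F. P F \<and> F y \<noteq> F z" if yz: "y \<in> S \<and> z \<in> S \<and> y \<noteq> z" for y z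
    proof -
      obtain a b where "a \<in> K" "b \<in> K" "y = \<Phi> a" "z = \<Phi> b"
        using yz unfolding S_def by blast
      then obtain f where "f \<in> A" "f a \<noteq> f b"
        using separating yz by blast
      moreover have "continuous_on S (\<lambda>u. coords u f)"
        by (rule continuous_on_compose2[OF continuous_on_product_coordinates continuous_on_coords]) simp
      ultimately show ?thesis
        using \<open>y = \<Phi> a\<close> \<open>z = \<Phi> b\<close>
        by (intro exI[of _ "\<lambda>u. coords u f"]) (auto simp: P_def \<Phi>_def)
    qed
  qed
  then obtain F h where "\<forall>y\<in>S. \<bar>g (\<Psi> y) - F y\<bar> < e" "h \<in> A" "\<forall>x\<in>K. F (\<Phi> x) = h x"
    unfolding P_def by auto
  then show ?thesis
    using \<Psi>_\<Phi> by (intro bexI[of _ h]) (auto simp: S_def)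
qed

lemma decseq_compactin_Inter_nonempty:
  assumes "Hausdorff_space X" and compact: "\<And>n. compactin X (C n)"
    and nonempty: "\<And>n. C n \<noteq> {}" and "decseq C"
  shows "(\<Inter>n. C n) \<noteq> {}"
proof -
  have "C 0 \<inter> \<Inter>\<F> \<noteq> {}" if F: "finite \<F>" "\<F> \<subseteq> range C" for \<F>
  proof -
    obtain N where N: "finite N" "\<F> = C ` N"
      using finite_subset_image[OF F] by blast
    have "C (Max (insert 0 N)) \<subseteq> C n" if "n \<in> insert 0 N" for n
      by (intro decseqD[OF \<open>decseq C\<close>] Max_ge) (use N(1) that in auto)
    then have "C (Max (insert 0 N)) \<subseteq> C 0 \<inter> \<Inter>\<F>"
      using N(2) by blast
    then show ?thesis using nonempty by blast
  qed
  moreover have "\<forall>D\<in>range C. closedin X D"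
    using compactin_imp_closedin[OF \<open>Hausdorff_space X\<close> compact] by blast
  ultimately have "C 0 \<inter> \<Inter>(range C) \<noteq> {}"
    using compact[of 0] unfolding compactin_fip by blast
  then show ?thesis by blast
qed

lemma real_clamp_in_interval: "0 \<le> M \<Longrightarrow> \<bar>clamp (- M) M t\<bar> \<le> (M::real)"
  using clamp_in_interval[of "- M" M t] by (simp add: abs_le_iff)

lemma real_clamp_nonexpansive: "\<bar>clamp a b s - clamp a b t\<bar> \<le> \<bar>s - (t::real)\<bar>"
  using dist_clamps_le_dist_args[of a b s t] by (simp add: dist_real_def)

lemma real_clamp_cancel: "a \<le> t \<Longrightarrow> t \<le> b \<Longrightarrow> clamp a b t = (t::real)"
  by (simp add: clamp_cancel_cbox)

lemma continuous_on_real_clamp: "continuous_on S (clamp a (b::real))"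
  using clamp_continuous_on[of a b "\<lambda>x. x" S] by simp

lemma algebra_approx_comp:
  fixes A :: "('a \<Rightarrow> real) set"
  assumes add: "\<And>f g. f \<in> A \<Longrightarrow> g \<in> A \<Longrightarrow> (\<lambda>x. f x + g x) \<in> A"
    and mult: "\<And>f g. f \<in> A \<Longrightarrow> g \<in> A \<Longrightarrow> (\<lambda>x. f x * g x) \<in> A"
    and const: "\<And>c. (\<lambda>x. c) \<in> A"
    and "h \<in> A" and "compact C" and "h ` T \<subseteq> C"
    and "continuous_on C \<phi>" and "0 < e"
  shows "\<exists>k\<in>A. \<forall>x\<in>T. \<bar>\<phi> (h x) - k x\<bar> < e"
proof -
  define Q where "Q q \<longleftrightarrow> continuous_on C q \<and> (\<lambda>x. q (h x)) \<in> A" for q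
  have "\<exists>q. Q q \<and> (\<forall>t\<in>C. \<bar>\<phi> t - q t\<bar> < e)"
  proof (rule Stone_Weierstrass_HOL[OF \<open>compact C\<close> _ _ _ _ _ \<open>continuous_on C \<phi>\<close> \<open>0 < e\<close>])
    show "Q (\<lambda>t. c)" for c
      unfolding Q_def using const by simp
    show "continuous_on C q" if "Q q" for q
      using that unfolding Q_def by blast
    show "Q (\<lambda>t. p t + q t)" if "Q p \<and> Q q" for p q
      using that add unfolding Q_def by (auto intro!: continuous_intros)
    show "Q (\<lambda>t. p t * q t)" if "Q p \<and> Q q" for p q
      using that mult unfolding Q_def by (auto intro!: continuous_intros)
    show "\<exists>q. Q q \<and> q s \<noteq> q t" if "s \<in> C \<and> t \<in> C \<and> s \<noteq> t" for s t
      using that \<open>h \<in> A\<close> unfolding Q_def by (intro exI[of _ "\<lambda>t. t"]) auto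
  qed
  then obtain q where "(\<lambda>x. q (h x)) \<in> A" "\<forall>t\<in>C. \<bar>\<phi> t - q t\<bar> < e"
    unfolding Q_def by blast
  with \<open>h ` T \<subseteq> C\<close> show ?thesis
    by (intro bexI[of _ "\<lambda>x. q (h x)"]) auto
qed

lemma Cb_subalgebra_approx_on_compactin:
  fixes A :: "('a \<Rightarrow> real) set"
  assumes "compactin X K" and "A \<subseteq> Cb X"
    and add: "\<And>f g. f \<in> A \<Longrightarrow> g \<in> A \<Longrightarrow> (\<lambda>x. f x + g x) \<in> A"
    and mult: "\<And>f g. f \<in> A \<Longrightarrow> g \<in> A \<Longrightarrow> (\<lambda>x. f x * g x) \<in> A"
    and const: "\<And>c. (\<lambda>x. c) \<in> A"
    and separating: "\<And>x y. x \<in> K \<Longrightarrow> y \<in> K \<Longrightarrow> x \<noteq> y \<Longrightarrow> \<exists>f\<in>A. f x \<noteq> f y"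
    and "continuous_map X euclideanreal g" and "0 \<le> M" and g_bound: "\<And>x. x \<in> topspace X \<Longrightarrow> \<bar>g x\<bar> \<le> M"
    and "0 < e"
  shows "\<exists>k\<in>A. (\<forall>x\<in>topspace X. \<bar>k x\<bar> < M + e) \<and> (\<forall>x\<in>K. \<bar>g x - k x\<bar> < 2 * e)"
proof -
  have continuous: "continuous_map X euclideanreal f" if "f \<in> A" for f
    using \<open>A \<subseteq> Cb X\<close> that unfolding Cb_def by blast
  obtain h where "h \<in> A" and h_approx: "\<And>x. x \<in> K \<Longrightarrow> \<bar>g x - h x\<bar> < e"
    using Stone_Weierstrass_compactin[OF \<open>compactin X K\<close> continuous add mult const separating
        \<open>continuous_map X euclideanreal g\<close> \<open>0 < e\<close>] by blast
  have "bounded (h ` topspace X)"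
    using \<open>h \<in> A\<close> \<open>A \<subseteq> Cb X\<close> by (auto simp: Cb_def)
  then obtain N where "\<forall>y\<in>h ` topspace X. \<bar>y\<bar> \<le> N"
    unfolding bounded_pos real_norm_def by blast
  then have h_range: "h ` topspace X \<subseteq> {-N..N}"
    by (auto simp: abs_le_iff minus_le_iff)
  \<comment> \<open>clipping h to [-M, M] keeps it close to g on K and bounds it like g everywhere\<close>
  obtain k where "k \<in> A" and k_approx: "\<And>x. x \<in> topspace X \<Longrightarrow> \<bar>clamp (- M) M (h x) - k x\<bar> < e"
    using algebra_approx_comp[OF add mult const \<open>h \<in> A\<close> compact_Icc h_range continuous_on_real_clamp \<open>0 < e\<close>]
    by blast
  have "\<bar>k x\<bar> < M + e" if "x \<in> topspace X" for x
    using k_approx[OF that] real_clamp_in_interval[OF \<open>0 \<le> M\<close>, of "h x"] by linarith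
  moreover have "\<bar>g x - k x\<bar> < 2 * e" if "x \<in> K" for x
  proof -
    have "x \<in> topspace X"
      using \<open>compactin X K\<close> that compactin_subset_topspace by blast
    then have "clamp (- M) M (g x) = g x"
      using g_bound by (simp add: real_clamp_cancel abs_le_iff minus_le_iff)
    then have "\<bar>g x - clamp (- M) M (h x)\<bar> \<le> \<bar>g x - h x\<bar>"
      using real_clamp_nonexpansive[of "- M" M "g x" "h x"] by simp
    then show ?thesis
      using h_approx[OF that] k_approx[OF \<open>x \<in> topspace X\<close>] by linarith
  qed
  ultimately show ?thesis
    using \<open>k \<in> A\<close> by blast
qed

lemma wnorm_upper:
  assumes "wbounded X \<rho> u" and "x \<in> topspace X"
  shows "\<bar>u x\<bar> / \<rho> x \<le> wnorm X \<rho> u"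
  unfolding wnorm_def
  by (rule cSup_upper) (use assms in \<open>auto simp: wbounded_def\<close>)

lemma wnorm_least:
  assumes "0 \<le> B" and "\<And>x. x \<in> topspace X \<Longrightarrow> \<bar>u x\<bar> / \<rho> x \<le> B"
  shows "wnorm X \<rho> u \<le> B"
  unfolding wnorm_def
  by (rule cSup_least) (use assms in auto)

lemma wnorm_nonneg: "wbounded X \<rho> u \<Longrightarrow> 0 \<le> wnorm X \<rho> u"
  unfolding wnorm_def wbounded_def by (rule cSup_upper) auto

lemma wboundedI:
  assumes "\<And>x. x \<in> topspace X \<Longrightarrow> \<bar>u x\<bar> / \<rho> x \<le> B"
  shows "wbounded X \<rho> u"
  unfolding wbounded_def bdd_above_def using assms by blast

lemma wnorm_diff_triangle:
  assumes "wbounded X \<rho> (\<lambda>x. f x - g x)" and "0 \<le> B"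
    and nonneg: "\<And>x. x \<in> topspace X \<Longrightarrow> 0 \<le> \<rho> x"
    and close: "\<And>x. x \<in> topspace X \<Longrightarrow> \<bar>g x - k x\<bar> / \<rho> x \<le> B"
  shows "wbounded X \<rho> (\<lambda>x. f x - k x)"
    and "wnorm X \<rho> (\<lambda>x. f x - k x) \<le> wnorm X \<rho> (\<lambda>x. f x - g x) + B"
proof -
  have pointwise: "\<bar>f x - k x\<bar> / \<rho> x \<le> wnorm X \<rho> (\<lambda>x. f x - g x) + B"
    if "x \<in> topspace X" for x
  proof -
    have "\<bar>f x - k x\<bar> / \<rho> x \<le> \<bar>f x - g x\<bar> / \<rho> x + \<bar>g x - k x\<bar> / \<rho> x"
      using nonneg[OF that] abs_triangle_ineq[of "f x - g x" "g x - k x"]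
      by (simp add: add_divide_distrib[symmetric] divide_right_mono)
    also have "\<dots> \<le> wnorm X \<rho> (\<lambda>x. f x - g x) + B"
      using wnorm_upper[OF assms(1) that] close[OF that] by (rule add_mono)
    finally show ?thesis .
  qed
  then show "wbounded X \<rho> (\<lambda>x. f x - k x)"
    by (rule wboundedI)
  show "wnorm X \<rho> (\<lambda>x. f x - k x) \<le> wnorm X \<rho> (\<lambda>x. f x - g x) + B"
    using wnorm_nonneg[OF assms(1)] \<open>0 \<le> B\<close> pointwise by (intro wnorm_least) auto
qed

(* The weight need not be continuous, so instead of a minimum we use that its sublevel sets
   are nested nonempty compacta. *)
lemma weighted_space_weight_bounded_below:
  assumes "weighted_space X \<rho>"
  obtains c where "0 < c" and "\<And>x. x \<in> topspace X \<Longrightarrow> c \<le> \<rho> x"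
proof (rule ccontr)
  assume no_bound: "\<not> thesis"
  have pos: "\<And>x. x \<in> topspace X \<Longrightarrow> 0 < \<rho> x"
    and "Hausdorff_space X"
    and sublevel: "\<And>R. 0 \<le> R \<Longrightarrow> compactin X {x \<in> topspace X. \<rho> x \<le> R}"
    using assms unfolding weighted_space_def admissible_weight_def by auto
  define C where "C n = {x \<in> topspace X. \<rho> x \<le> 1 / Suc n}" for n :: nat
  have "(\<Inter>n. C n) \<noteq> {}"
  proof (rule decseq_compactin_Inter_nonempty[OF \<open>Hausdorff_space X\<close>])
    show "compactin X (C n)" for n
      unfolding C_def by (rule sublevel) simp
    show "C n \<noteq> {}" for n
      using no_bound that[of "1 / Suc n"] by (force simp: C_def)
    show "decseq C"
      unfolding decseq_def C_def by (auto intro: order_trans[OF _ frac_le])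
  qed
  then obtain x where "x \<in> topspace X" and "\<And>n. \<rho> x \<le> 1 / Suc n"
    unfolding C_def by blast
  moreover obtain n where "inverse (Suc n) < \<rho> x"
    using reals_Archimedean pos[OF \<open>x \<in> topspace X\<close>] by blast
  ultimately show False
    by (metis inverse_eq_divide not_le)
qed

lemma weighted_approx_Cb:
  fixes A :: "('a \<Rightarrow> real) set"
  assumes "weighted_space X \<rho>" and "A \<subseteq> Cb X"
    and add: "\<And>f g. f \<in> A \<Longrightarrow> g \<in> A \<Longrightarrow> (\<lambda>x. f x + g x) \<in> A"
    and mult: "\<And>f g. f \<in> A \<Longrightarrow> g \<in> A \<Longrightarrow> (\<lambda>x. f x * g x) \<in> A"
    and const: "\<And>c. (\<lambda>x. c) \<in> A"
    and separating: "\<And>x y. x \<in> topspace X \<Longrightarrow> y \<in> topspace X \<Longrightarrow> x \<noteq> y \<Longrightarrow> \<exists>f\<in>A. f x \<noteq> f y"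
    and "g \<in> Cb X" and "0 < \<epsilon>"
  shows "\<exists>k\<in>A. \<forall>x\<in>topspace X. \<bar>g x - k x\<bar> / \<rho> x \<le> \<epsilon>"
proof -
  have sublevel: "\<And>R. 0 \<le> R \<Longrightarrow> compactin X {x \<in> topspace X. \<rho> x \<le> R}"
    using assms(1) unfolding weighted_space_def admissible_weight_def by auto
  obtain c where "0 < c" and c: "\<And>x. x \<in> topspace X \<Longrightarrow> c \<le> \<rho> x"
    using weighted_space_weight_bounded_below[OF assms(1)] by blast
  obtain M where "0 < M" and g_bound: "\<And>x. x \<in> topspace X \<Longrightarrow> \<bar>g x\<bar> \<le> M"
    using \<open>g \<in> Cb X\<close> unfolding Cb_def bounded_pos by auto
  \<comment> \<open>outside K the weight exceeds R, which absorbs the uniform error bound 2 M + 2\<close>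
  define R where "R = (2 * M + 2) / \<epsilon>"
  define K where "K = {x \<in> topspace X. \<rho> x \<le> R}"
  define \<delta> where "\<delta> = min 1 (\<epsilon> * c / 2)"
  have "0 < \<delta>" "\<delta> \<le> 1" "2 * \<delta> \<le> \<epsilon> * c"
    using \<open>0 < \<epsilon>\<close> \<open>0 < c\<close> by (auto simp: \<delta>_def)
  have K_compact: "compactin X K"
    unfolding K_def R_def using \<open>0 < M\<close> \<open>0 < \<epsilon>\<close> by (intro sublevel) simp
  have g_continuous: "continuous_map X euclideanreal g"
    using \<open>g \<in> Cb X\<close> unfolding Cb_def by blast
  have separating_K: "\<exists>f\<in>A. f x \<noteq> f y" if "x \<in> K" "y \<in> K" "x \<noteq> y" for x y
    using separating that unfolding K_def by blast
  obtain k where "k \<in> A"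
    and k_bound: "\<And>x. x \<in> topspace X \<Longrightarrow> \<bar>k x\<bar> < M + \<delta>"
    and k_approx: "\<And>x. x \<in> K \<Longrightarrow> \<bar>g x - k x\<bar> < 2 * \<delta>"
    using Cb_subalgebra_approx_on_compactin[OF K_compact \<open>A \<subseteq> Cb X\<close> add mult const separating_K
        g_continuous less_imp_le[OF \<open>0 < M\<close>] g_bound \<open>0 < \<delta>\<close>]
    by blast
  have "\<bar>g x - k x\<bar> \<le> \<epsilon> * \<rho> x" if "x \<in> topspace X" for x
  proof (cases "x \<in> K")
    case True
    have "\<epsilon> * c \<le> \<epsilon> * \<rho> x"
      using c[OF that] \<open>0 < \<epsilon>\<close> by simp
    then show ?thesis
      using k_approx[OF True] \<open>2 * \<delta> \<le> \<epsilon> * c\<close> by linarith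
  next
    case False
    have "\<bar>g x - k x\<bar> \<le> \<bar>g x\<bar> + \<bar>k x\<bar>"
      by (rule abs_triangle_ineq4)
    also have "\<dots> < 2 * M + 2"
      using g_bound[OF that] k_bound[OF that] \<open>\<delta> \<le> 1\<close> by linarith
    also have "\<dots> = \<epsilon> * R"
      using \<open>0 < \<epsilon>\<close> by (simp add: R_def)
    also have "\<dots> \<le> \<epsilon> * \<rho> x"
      using False that \<open>0 < \<epsilon>\<close> by (simp add: K_def)
    finally show ?thesis
      by simp
  qed
  moreover have "0 < \<rho> x" if "x \<in> topspace X" for x
    using c[OF that] \<open>0 < c\<close> by linarith
  ultimately show ?thesis
    using \<open>k \<in> A\<close> by (auto simp: divide_le_eq mult.commute)
qed

theorem mainTheorem3:
  fixes X :: "'a topology" and \<rho> :: "'a \<Rightarrow> real" and A :: "('a \<Rightarrow> real) set"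
  assumes "weighted_space X \<rho>"
    and "A \<subseteq> Cb X"
    and "\<And>f g. f \<in> A \<Longrightarrow> g \<in> A \<Longrightarrow> (\<lambda>x. f x + g x) \<in> A"
    and "\<And>f c. f \<in> A \<Longrightarrow> (\<lambda>x. c * f x) \<in> A"
    and "\<And>f g. f \<in> A \<Longrightarrow> g \<in> A \<Longrightarrow> (\<lambda>x. f x * g x) \<in> A"
    and "(\<lambda>x. 1) \<in> A"
    and "\<And>x y. x \<in> topspace X \<Longrightarrow> y \<in> topspace X \<Longrightarrow> x \<noteq> y \<Longrightarrow> \<exists>f\<in>A. f x \<noteq> f y"
  shows "\<forall>f\<in>B_rho X \<rho>. \<forall>\<epsilon>>0. \<exists>g\<in>A.
           wbounded X \<rho> (\<lambda>x. f x - g x) \<and> wnorm X \<rho> (\<lambda>x. f x - g x) < \<epsilon>"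
proof (intro ballI allI impI)
  fix f and \<epsilon> :: real
  assume "f \<in> B_rho X \<rho>" and "0 < \<epsilon>"
  then obtain g where "g \<in> Cb X" and fg: "wbounded X \<rho> (\<lambda>x. f x - g x)"
    and fg_small: "wnorm X \<rho> (\<lambda>x. f x - g x) < \<epsilon> / 2"
    unfolding B_rho_def using half_gt_zero by blast
  have const: "(\<lambda>x. c) \<in> A" for c
    using assms(4)[OF assms(6), of c] by simp
  obtain k where "k \<in> A" and gk: "\<And>x. x \<in> topspace X \<Longrightarrow> \<bar>g x - k x\<bar> / \<rho> x \<le> \<epsilon> / 2"
    using weighted_approx_Cb[OF assms(1,2,3,5) const assms(7) \<open>g \<in> Cb X\<close> half_gt_zero[OF \<open>0 < \<epsilon>\<close>]]
    by blast
  have "0 \<le> \<rho> x" if "x \<in> topspace X" for x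
    using assms(1) that by (auto simp: weighted_space_def admissible_weight_def less_imp_le)
  note triangle = wnorm_diff_triangle[OF fg _ this gk]
  show "\<exists>g\<in>A. wbounded X \<rho> (\<lambda>x. f x - g x) \<and> wnorm X \<rho> (\<lambda>x. f x - g x) < \<epsilon>"
    using \<open>k \<in> A\<close> triangle fg_small \<open>0 < \<epsilon>\<close> by (intro bexI[of _ k] conjI) auto
qed

end
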